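(* Let $A,B$ be non-empty sets, $I$ a non-empty index set, $\{V_i\}_{i\in I}\subseteq\mathcal R(A)$, $\{W_i\}_{i\in I}\subseteq\mathcal R(B)$, and let $Z\in\mathcal R(A,B)$ be a uniform fuzzy relation such that the system $WL^{2\text{-}3}(A,B,I,V_i,W_i,Z)$ has a solution which is a uniform fuzzy relation. Then the greatest solution $R$ to $WL^{2\text{-}3}(A,B,I,V_i,W_i,Z)$ is a uniform fuzzy relation, $E_A^R$ is the greatest solution to $WL^{1\text{-}4}(A,I,V_i,Z\circ Z^{-1})$, and $E_B^R$ is the greatest solution to $WL^{1\text{-}4}(B,I,W_i,Z^{-1}\circ Z)$.
   Context: $\mathcal L=(L,\wedge,\vee,\otimes,\to,0,1)$ is a complete residuated lattice; $x\leftrightarrow y=(x\to y)\wedge(y\to x)$. For non-empty sets $X,Y$, $\mathcal R(X,Y)$ is the set of fuzzy relations $X\times Y\to L$, $\mathcal R(X)=\mathcal R(X,X)$, ordered pointwise; $R^{-1}(y,x)=R(x,y)$; $(R\circ S)(x,t)=\bigvee_{y}R(x,y)\otimes S(y,t)$. For $R\in\mathcal R(A,B)$: kernel $E_A^R(a_1,a_2)=\bigwedge_{b\in B}R(a_1,b)\leftrightarrow R(a_2,b)$; co-kernel $E_B^R(b_1,b_2)=\bigwedge_{a\in A}R(a,b_1)\leftrightarrow R(a,b_2)$. $R$ is uniform if every $a$ has some $b$ with $R(a,b)=1$, every $b$ has some $a$ with $R(a,b)=1$, and $R(a,b_1)\otimes R(a,b_2)\le E_B^R(b_1,b_2)$ for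 all $a,b_1,b_2$. $WL^{2\text{-}3}(A,B,I,V_i,W_i,Z)$ (unknown $U\in\mathcal R(A,B)$): $U^{-1}\circ V_i\le W_i\circ U^{-1}$ and $U\circ W_i\le V_i\circ U$ for all $i$, and $U\le Z$; it always has a greatest solution. $WL^{1\text{-}4}(X,I,V_i,W)$ (unknown $U\in\mathcal R(X)$): $U\circ V_i\le V_i\circ U$ and $U^{-1}\circ V_i\le V_i\circ U^{-1}$ for all $i$, and $U\le W$, $U^{-1}\le W$. *)

theory Defs
  imports Main
begin

text \<open>The least element
  bot plays the role of 0.\<close>
class complete_residuated_lattice = complete_lattice + comm_monoid_mult +
  fixes res :: "'a \<Rightarrow> 'a \<Rightarrow> 'a"
  assumes one_is_top: "(1::'a) = top"
  assumes residuation: "x * y \<le> z \<longleftrightarrow> x \<le> res y z"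

definition biimp :: "'l::complete_residuated_lattice \<Rightarrow> 'l \<Rightarrow> 'l" where
  "biimp x y = inf (res x y) (res y x)"

text \<open>Fuzzy relations X \<times> Y \<rightarrow> L are functions 'x \<Rightarrow> 'y \<Rightarrow> 'l, ordered pointwise.\<close>

definition conv :: "('x \<Rightarrow> 'y \<Rightarrow> 'l) \<Rightarrow> ('y \<Rightarrow> 'x \<Rightarrow> 'l)" where
  "conv R = (\<lambda>y x. R x y)"

definition rcomp :: "('x \<Rightarrow> 'y \<Rightarrow> 'l::complete_residuated_lattice) \<Rightarrow> ('y \<Rightarrow> 'z \<Rightarrow> 'l) \<Rightarrow> ('x \<Rightarrow> 'z \<Rightarrow> 'l)" where
  "rcomp R S = (\<lambda>x t. SUP y. R x y * S y t)"

definition kernel :: "('a \<Rightarrow> 'b \<Rightarrow> 'l::complete_residuated_lattice) \<Rightarrow> ('a \<Rightarrow> 'a \<Rightarrow> 'l)" where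
  "kernel R = (\<lambda>a1 a2. INF b. biimp (R a1 b) (R a2 b))"

definition cokernel :: "('a \<Rightarrow> 'b \<Rightarrow> 'l::complete_residuated_lattice) \<Rightarrow> ('b \<Rightarrow> 'b \<Rightarrow> 'l)" where
  "cokernel R = (\<lambda>b1 b2. INF a. biimp (R a b1) (R a b2))"

definition uniform :: "('a \<Rightarrow> 'b \<Rightarrow> 'l::complete_residuated_lattice) \<Rightarrow> bool" where
  "uniform R \<longleftrightarrow> (\<forall>a. \<exists>b. R a b = 1) \<and> (\<forall>b. \<exists>a. R a b = 1) \<and>
     (\<forall>a b1 b2. R a b1 * R a b2 \<le> cokernel R b1 b2)"

definition sol_WL23 :: "('i \<Rightarrow> 'a \<Rightarrow> 'a \<Rightarrow> 'l::complete_residuated_lattice) \<Rightarrow> ('i \<Rightarrow> 'b \<Rightarrow> 'b \<Rightarrow> 'l)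
    \<Rightarrow> ('a \<Rightarrow> 'b \<Rightarrow> 'l) \<Rightarrow> ('a \<Rightarrow> 'b \<Rightarrow> 'l) \<Rightarrow> bool" where
  "sol_WL23 V W Z U \<longleftrightarrow>
     (\<forall>i. rcomp (conv U) (V i) \<le> rcomp (W i) (conv U) \<and> rcomp U (W i) \<le> rcomp (V i) U) \<and> U \<le> Z"

definition sol_WL14 :: "('i \<Rightarrow> 'x \<Rightarrow> 'x \<Rightarrow> 'l::complete_residuated_lattice) \<Rightarrow> ('x \<Rightarrow> 'x \<Rightarrow> 'l)
    \<Rightarrow> ('x \<Rightarrow> 'x \<Rightarrow> 'l) \<Rightarrow> bool" where
  "sol_WL14 V W U \<longleftrightarrow>
     (\<forall>i. rcomp U (V i) \<le> rcomp (V i) U \<and> rcomp (conv U) (V i) \<le> rcomp (V i) (conv U)) \<and>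
     U \<le> W \<and> conv U \<le> W"

definition greatest_sol :: "('r::order \<Rightarrow> bool) \<Rightarrow> 'r \<Rightarrow> bool" where
  "greatest_sol P R \<longleftrightarrow> P R \<and> (\<forall>U. P U \<longrightarrow> U \<le> R)"

end

theory Submission
  imports Defs
begin

text \<open>Both inequalities of the two systems say that \<open>U\<close> is linked to the families \<open>V\<close>
  and \<open>W\<close>, a property stable under composition and converse. Difunctionality of \<open>Z\<close>
  keeps the compositions below \<open>Z\<close>, so \<open>R \<circ> R\<inverse> \<circ> R\<close> is a solution, hence below \<open>R\<close>:
  the greatest solution is difunctional and, containing a uniform solution, uniform. Its
  kernel is then \<open>R \<circ> R\<inverse>\<close>, a solution of the reflexive system; for any other solution
  \<open>U\<close> of that system \<open>U \<circ> R\<close> solves the original one, so \<open>U \<circ> R \<le> R\<close> and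
  \<open>U \<le> U \<circ> R \<circ> R\<inverse> \<le> R \<circ> R\<inverse>\<close>. The co-kernel statement is the kernel statement for the
  converse relations.\<close>

notation rcomp (infixl "\<bullet>" 75)

lemma mult_mono_residuated: "x \<le> y \<Longrightarrow> u \<le> v \<Longrightarrow> x * u \<le> y * (v::'l::complete_residuated_lattice)"
  by (metis residuation mult.commute order_refl order_trans)

lemma SUP_mult_distrib: "(SUP i\<in>A. f i) * (x::'l::complete_residuated_lattice) = (SUP i\<in>A. f i * x)"
proof (rule antisym)
  show "(SUP i\<in>A. f i) * x \<le> (SUP i\<in>A. f i * x)"
    unfolding residuation
    by (rule SUP_least) (simp add: residuation[symmetric] SUP_upper2)
  show "(SUP i\<in>A. f i * x) \<le> (SUP i\<in>A. f i) * x"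
    by (auto intro!: SUP_least mult_mono_residuated SUP_upper)
qed

lemma mult_SUP_distrib: "(x::'l::complete_residuated_lattice) * (SUP i\<in>A. f i) = (SUP i\<in>A. x * f i)"
  using SUP_mult_distrib[of f A x] by (simp add: mult.commute)

lemma biimp_one_le: "biimp 1 y \<le> (y::'l::complete_residuated_lattice)"
proof -
  have "res 1 y \<le> y"
    using residuation[of "res 1 y" 1 y] by simp
  then show ?thesis
    unfolding biimp_def by (rule le_infI1)
qed

lemma rcomp_assoc: "R \<bullet> S \<bullet> T = R \<bullet> (S \<bullet> T)"
  unfolding rcomp_def
  by (auto simp: SUP_mult_distrib mult_SUP_distrib mult.assoc intro!: ext) (rule SUP_commute)

lemma rcomp_mono: "R \<le> R' \<Longrightarrow> S \<le> S' \<Longrightarrow> R \<bullet> S \<le> R' \<bullet> S'"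
  unfolding rcomp_def le_fun_def
  by (auto intro!: SUP_mono' mult_mono_residuated)

lemma rcomp_upper: "R x y * S y z \<le> (R \<bullet> S) x z"
  unfolding rcomp_def by (rule SUP_upper) simp

lemma rcomp3_least:
  assumes "\<And>y z. R x y * S y z * T z t \<le> c"
  shows "(R \<bullet> S \<bullet> T) x t \<le> c"
  unfolding rcomp_def using assms
  by (auto simp: SUP_mult_distrib intro!: SUP_least)

lemma rcomp3_upper: "R x y * S y z * T z t \<le> (R \<bullet> S \<bullet> T) x t"
  by (meson mult_mono_residuated order_refl order_trans rcomp_upper)

lemma conv_conv [simp]: "conv (conv R) = R"
  unfolding conv_def by simp

lemma conv_le_conv_iff [simp]: "conv R \<le> conv S \<longleftrightarrow> R \<le> S"
  unfolding conv_def le_fun_def by auto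

lemma conv_rcomp: "conv (R \<bullet> S) = conv S \<bullet> conv R"
  unfolding rcomp_def conv_def by (auto simp: mult.commute)

definition difunctional :: "('a \<Rightarrow> 'b \<Rightarrow> 'l::complete_residuated_lattice) \<Rightarrow> bool" where
  "difunctional R \<longleftrightarrow> R \<bullet> conv R \<bullet> R \<le> R"

lemma difunctional_iff:
  "difunctional R \<longleftrightarrow> (\<forall>a a' b b'. R a b * R a' b * R a' b' \<le> R a b')"
proof
  assume "difunctional R"
  then show "\<forall>a a' b b'. R a b * R a' b * R a' b' \<le> R a b'"
    unfolding difunctional_def le_fun_def
    by (metis conv_def order_trans rcomp3_upper)
next
  assume "\<forall>a a' b b'. R a b * R a' b * R a' b' \<le> R a b'"
  then show "difunctional R"
    unfolding difunctional_def le_fun_def by (auto simp: conv_def intro!: rcomp3_least)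
qed

lemma difunctional_conv [simp]: "difunctional (conv R) \<longleftrightarrow> difunctional R"
proof -
  have "conv R \<bullet> conv (conv R) \<bullet> conv R = conv (R \<bullet> conv R \<bullet> R)"
    by (simp add: conv_rcomp rcomp_assoc)
  then show ?thesis
    unfolding difunctional_def by simp
qed

lemma difunctional_iff_le_cokernel:
  "difunctional R \<longleftrightarrow> (\<forall>a b1 b2. R a b1 * R a b2 \<le> cokernel R b1 b2)"
proof -
  have "R a b1 * R a b2 \<le> cokernel R b1 b2 \<longleftrightarrow>
      (\<forall>a'. R a' b1 * R a b1 * R a b2 \<le> R a' b2 \<and> R a' b2 * R a b2 * R a b1 \<le> R a' b1)"
    for a b1 b2
    unfolding cokernel_def biimp_def le_INF_iff le_inf_iff residuation[symmetric]
    by (simp add: ac_simps)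
  then show ?thesis
    unfolding difunctional_iff by blast
qed

lemma uniform_iff_difunctional:
  "uniform R \<longleftrightarrow> (\<forall>a. \<exists>b. R a b = 1) \<and> (\<forall>b. \<exists>a. R a b = 1) \<and> difunctional R"
  unfolding uniform_def difunctional_iff_le_cokernel ..

lemma uniform_conv: "uniform R \<Longrightarrow> uniform (conv R)"
  using difunctional_conv[of R] unfolding uniform_iff_difunctional by (auto simp: conv_def)

lemma kernel_conv: "kernel (conv R) = cokernel R"
  unfolding kernel_def cokernel_def conv_def ..

lemma rcomp_conv_le_kernel:
  assumes "difunctional R"
  shows "R \<bullet> conv R \<le> kernel R"
  unfolding le_fun_def rcomp_def kernel_def biimp_def conv_def
proof (intro allI SUP_least INF_greatest le_infI)
  fix a1 a2 b b'
  show "R a1 b * R a2 b \<le> res (R a1 b') (R a2 b')"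
    using assms[unfolded difunctional_iff, rule_format, of a2 b a1 b']
    by (simp add: residuation[symmetric] ac_simps)
  show "R a1 b * R a2 b \<le> res (R a2 b') (R a1 b')"
    using assms[unfolded difunctional_iff, rule_format, of a1 b a2 b']
    by (simp add: residuation[symmetric] ac_simps)
qed

lemma kernel_le_rcomp_conv:
  assumes "\<forall>a. \<exists>b. R a b = 1"
  shows "kernel R \<le> R \<bullet> conv R"
proof (rule le_funI)+
  fix a1 a2
  obtain b where b: "R a1 b = 1" using assms by blast
  have "kernel R a1 a2 \<le> biimp 1 (R a2 b)"
    unfolding kernel_def b[symmetric] by (rule INF_lower) simp
  also have "\<dots> \<le> R a1 b * conv R b a2"
    using biimp_one_le by (simp add: b conv_def)
  also have "\<dots> \<le> (R \<bullet> conv R) a1 a2"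
    by (rule rcomp_upper)
  finally show "kernel R a1 a2 \<le> (R \<bullet> conv R) a1 a2" .
qed

lemma kernel_eq_rcomp_conv: "uniform R \<Longrightarrow> kernel R = R \<bullet> conv R"
  unfolding uniform_iff_difunctional
  by (blast intro: antisym kernel_le_rcomp_conv rcomp_conv_le_kernel)

lemma le_rcomp_rcomp_conv:
  assumes "\<forall>b. \<exists>c. R b c = 1"
  shows "U \<le> U \<bullet> R \<bullet> conv R"
proof (rule le_funI)+
  fix a b
  obtain c where c: "R b c = 1" using assms by blast
  have "U a b = U a b * R b c * conv R c b"
    by (simp add: c conv_def)
  also have "\<dots> \<le> (U \<bullet> R \<bullet> conv R) a b"
    by (rule rcomp3_upper)
  finally show "U a b \<le> (U \<bullet> R \<bullet> conv R) a b" .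
qed

definition linked :: "('i \<Rightarrow> 'a \<Rightarrow> 'a \<Rightarrow> 'l::complete_residuated_lattice) \<Rightarrow> ('i \<Rightarrow> 'b \<Rightarrow> 'b \<Rightarrow> 'l)
    \<Rightarrow> ('a \<Rightarrow> 'b \<Rightarrow> 'l) \<Rightarrow> bool" where
  "linked V W U \<longleftrightarrow> (\<forall>i. conv U \<bullet> V i \<le> W i \<bullet> conv U \<and> U \<bullet> W i \<le> V i \<bullet> U)"

lemma linked_conv [simp]: "linked W V (conv U) \<longleftrightarrow> linked V W U"
  unfolding linked_def by auto

lemma linked_rcomp:
  assumes "linked V W R" and "linked W X S"
  shows "linked V X (R \<bullet> S)"
  unfolding linked_def
proof (intro allI conjI)
  fix i
  have R: "conv R \<bullet> V i \<le> W i \<bullet> conv R" "R \<bullet> W i \<le> V i \<bullet> R"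
    and S: "conv S \<bullet> W i \<le> X i \<bullet> conv S" "S \<bullet> X i \<le> W i \<bullet> S"
    using assms unfolding linked_def by auto
  have "conv (R \<bullet> S) \<bullet> V i = conv S \<bullet> (conv R \<bullet> V i)"
    by (simp add: conv_rcomp rcomp_assoc)
  also have "\<dots> \<le> (conv S \<bullet> W i) \<bullet> conv R"
    using R(1) by (simp add: rcomp_mono rcomp_assoc)
  also have "\<dots> \<le> X i \<bullet> conv (R \<bullet> S)"
    using S(1) by (simp add: rcomp_mono conv_rcomp flip: rcomp_assoc)
  finally show "conv (R \<bullet> S) \<bullet> V i \<le> X i \<bullet> conv (R \<bullet> S)" .
  have "R \<bullet> S \<bullet> X i \<le> R \<bullet> W i \<bullet> S"
    using S(2) by (simp add: rcomp_mono rcomp_assoc)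
  also have "\<dots> \<le> V i \<bullet> (R \<bullet> S)"
    using R(2) by (simp add: rcomp_mono flip: rcomp_assoc)
  finally show "R \<bullet> S \<bullet> X i \<le> V i \<bullet> (R \<bullet> S)" .
qed

lemma sol_WL23_iff: "sol_WL23 V W Z U \<longleftrightarrow> linked V W U \<and> U \<le> Z"
  unfolding sol_WL23_def linked_def ..

lemma sol_WL14_iff: "sol_WL14 V Y U \<longleftrightarrow> linked V V U \<and> U \<le> Y \<and> conv U \<le> Y"
  unfolding sol_WL14_def linked_def by blast

lemma sol_WL23_conv [simp]: "sol_WL23 W V (conv Z) (conv U) \<longleftrightarrow> sol_WL23 V W Z U"
  unfolding sol_WL23_iff by simp

lemma greatest_sol_WL23_conv:
  assumes "greatest_sol (sol_WL23 V W Z) R"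
  shows "greatest_sol (sol_WL23 W V (conv Z)) (conv R)"
  unfolding greatest_sol_def
proof (intro conjI allI impI)
  show "sol_WL23 W V (conv Z) (conv R)"
    using assms unfolding greatest_sol_def by simp
  fix U
  assume "sol_WL23 W V (conv Z) U"
  then have "conv U \<le> R"
    using assms sol_WL23_conv[of W V Z "conv U"] unfolding greatest_sol_def by simp
  then show "U \<le> conv R"
    by (metis conv_conv conv_le_conv_iff)
qed

lemma greatest_sol_WL23_difunctional:
  assumes Z: "difunctional Z" and R: "greatest_sol (sol_WL23 V W Z) R"
  shows "difunctional R"
proof -
  have "linked V W R" and "R \<le> Z"
    using R unfolding greatest_sol_def sol_WL23_iff by auto
  then have "linked V W (R \<bullet> conv R \<bullet> R)"
    by (intro linked_rcomp) simp_all
  moreover have "R \<bullet> conv R \<bullet> R \<le> Z"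
    using \<open>R \<le> Z\<close> Z unfolding difunctional_def
    by (meson conv_le_conv_iff order_trans rcomp_mono)
  ultimately have "R \<bullet> conv R \<bullet> R \<le> R"
    using R unfolding greatest_sol_def sol_WL23_iff by blast
  then show ?thesis
    unfolding difunctional_def .
qed

lemma greatest_sol_WL23_uniform:
  assumes "difunctional Z" and "sol_WL23 V W Z U" and "uniform U"
    and "greatest_sol (sol_WL23 V W Z) R"
  shows "uniform R"
proof -
  have "U \<le> R"
    using assms unfolding greatest_sol_def by blast
  then have "R a b = 1" if "U a b = 1" for a b
    using that by (metis le_funD one_is_top top_unique)
  then show ?thesis
    using assms greatest_sol_WL23_difunctional unfolding uniform_iff_difunctional by metis
qed

lemma greatest_sol_WL14_kernel:
  assumes Z: "difunctional Z" and "uniform R" and R: "greatest_sol (sol_WL23 V W Z) R"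
  shows "greatest_sol (sol_WL14 V (Z \<bullet> conv Z)) (kernel R)"
proof -
  have linked: "linked V W R" and "R \<le> Z"
    using R unfolding greatest_sol_def sol_WL23_iff by auto
  have kernel: "kernel R = R \<bullet> conv R"
    using \<open>uniform R\<close> by (rule kernel_eq_rcomp_conv)
  have "sol_WL14 V (Z \<bullet> conv Z) (R \<bullet> conv R)"
    unfolding sol_WL14_iff
    using linked \<open>R \<le> Z\<close> by (simp add: linked_rcomp conv_rcomp rcomp_mono)
  moreover have "U \<le> R \<bullet> conv R" if U: "sol_WL14 V (Z \<bullet> conv Z) U" for U
  proof -
    have "linked V W (U \<bullet> R)"
      using U linked unfolding sol_WL14_iff by (blast intro: linked_rcomp)
    moreover have "U \<bullet> R \<le> Z"
      using U \<open>R \<le> Z\<close> Z unfolding sol_WL14_iff difunctional_def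
      by (meson order_trans rcomp_mono)
    ultimately have "U \<bullet> R \<le> R"
      using R unfolding greatest_sol_def sol_WL23_iff by blast
    then have "U \<bullet> R \<bullet> conv R \<le> R \<bullet> conv R"
      by (simp add: rcomp_mono)
    moreover have "U \<le> U \<bullet> R \<bullet> conv R"
      using \<open>uniform R\<close> unfolding uniform_def by (blast intro: le_rcomp_rcomp_conv)
    ultimately show ?thesis
      by order
  qed
  ultimately show ?thesis
    unfolding greatest_sol_def kernel by blast
qed

theorem theorem7p3:
  fixes V :: "'i \<Rightarrow> 'a \<Rightarrow> 'a \<Rightarrow> 'l::complete_residuated_lattice"
    and W :: "'i \<Rightarrow> 'b \<Rightarrow> 'b \<Rightarrow> 'l"
    and Z R :: "'a \<Rightarrow> 'b \<Rightarrow> 'l"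
  assumes "uniform Z"
    and "\<exists>U. sol_WL23 V W Z U \<and> uniform U"
    and "greatest_sol (sol_WL23 V W Z) R"
  shows "uniform R \<and>
         greatest_sol (sol_WL14 V (rcomp Z (conv Z))) (kernel R) \<and>
         greatest_sol (sol_WL14 W (rcomp (conv Z) Z)) (cokernel R)"
proof -
  obtain U where U: "sol_WL23 V W Z U" "uniform U"
    using assms(2) by blast
  have Z: "difunctional Z" and Z': "difunctional (conv Z)"
    using assms(1) by (simp_all add: uniform_iff_difunctional)
  have R: "uniform R"
    using Z U assms(3) by (rule greatest_sol_WL23_uniform)
  have "greatest_sol (sol_WL14 W (conv Z \<bullet> conv (conv Z))) (kernel (conv R))"
    using Z' uniform_conv[OF R] greatest_sol_WL23_conv[OF assms(3)]
    by (rule greatest_sol_WL14_kernel)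
  then show ?thesis
    using R greatest_sol_WL14_kernel[OF Z R assms(3)] by (simp add: kernel_conv)
qed

end
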